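(* Let $\mathcal{X}=(X_1,\ldots,X_r)$ be a directed path-decomposition of a digraph $G=(V,E)$. Let $A,B\subseteq V$ with $A\cap B=\emptyset$ and $\{(u,v),(v,u) : u\in A, v\in B\}\subseteq E$. If there is some $i$, $1\le i\le r$, with $A\subseteq X_i$, then there are $1\le i_1\le i_2\le r$ such that 1. $A\subseteq X_i$ for all $i$ with $i_1\le i\le i_2$, 2. $B\subseteq \bigcup_{i=i_1}^{i_2}X_i$, and 3. $(X'_{i_1},\ldots,X'_{i_2})$, where $X'_i=X_i\cap(A\cup B)$, is a directed path-decomposition of the subdigraph of $G$ induced by $A\cup B$.
   Context: Digraphs are finite, without loops or multiple arcs. A directed path-decomposition of a digraph $G=(V,E)$ is a sequence $(X_1,\ldots,X_r)$ of subsets of $V$ such that: (i) $X_1\cup\cdots\cup X_r=V$; (ii) for each $(u,v)\in E$ there are $i\le j$ with $u\in X_i$, $v\in X_j$; (iii) if $u\in X_i$ and $u\in X_j$ with $i\le j$, then $u\in X_\ell$ for all $i\le\ell\le j$. *)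

theory Defs
  imports Main
begin

text \<open>A digraph is a pair (V, E) with V finite, E a set of arcs between vertices of V,
 with no loops (no multiple arcs is automatic for a relation).\<close>
definition digraph :: "'a set \<Rightarrow> ('a \<times> 'a) set \<Rightarrow> bool" where
  "digraph V E \<longleftrightarrow> finite V \<and> E \<subseteq> V \<times> V \<and> (\<forall>v. (v, v) \<notin> E)"

text \<open>Directed path-decomposition; the sequence (X_1,...,X_r) is the list Xs,
 with X_i = Xs ! (i-1).\<close>
definition dir_path_decomp :: "'a set \<Rightarrow> ('a \<times> 'a) set \<Rightarrow> 'a set list \<Rightarrow> bool" where
  "dir_path_decomp V E Xs \<longleftrightarrow>
     \<Union>(set Xs) = V \<and>
     (\<forall>(u, v) \<in> E. \<exists>i j. i \<le> j \<and> j < length Xs \<and> u \<in> Xs ! i \<and> v \<in> Xs ! j) \<and>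
     (\<forall>u i j l. i \<le> l \<and> l \<le> j \<and> j < length Xs \<and> u \<in> Xs ! i \<and> u \<in> Xs ! j \<longrightarrow> u \<in> Xs ! l)"

definition induced_arcs :: "('a \<times> 'a) set \<Rightarrow> 'a set \<Rightarrow> ('a \<times> 'a) set" where
  "induced_arcs E S = E \<inter> (S \<times> S)"

end

theory Submission
  imports Defs
begin

text \<open>By convexity of the bags containing each vertex, the bags containing \<open>A\<close> form an interval
  \<open>[L, R]\<close>. A vertex \<open>b \<in> B\<close> must occur in this interval: if all its bags lay left of \<open>L\<close>, the arcs
  \<open>(a, b)\<close> would force every \<open>a \<in> A\<close> into the bag before \<open>L\<close>, and symmetrically the arcs \<open>(b, a)\<close>
  exclude bags right of \<open>R\<close>. Finally, clamping bag indices into \<open>[L, R]\<close> preserves membership of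
  every vertex of \<open>A \<union> B\<close> and the order of the bags, so the restricted window is again a directed
  path-decomposition.\<close>

context
  fixes V :: "'a set" and E :: "('a \<times> 'a) set" and Xs :: "'a set list"
  assumes dpd: "dir_path_decomp V E Xs"
begin

lemma dir_path_decomp_vertex_in_bag:
  assumes "v \<in> V"
  obtains i where "i < length Xs" "v \<in> Xs ! i"
proof -
  have "v \<in> \<Union>(set Xs)"
    using dpd assms unfolding dir_path_decomp_def by (elim conjE) blast
  then show ?thesis
    using that by (auto simp: in_set_conv_nth)
qed

lemma dir_path_decomp_arc:
  assumes "(u, v) \<in> E"
  obtains i j where "i \<le> j" "j < length Xs" "u \<in> Xs ! i" "v \<in> Xs ! j"
proof -
  have "\<forall>(u, v) \<in> E. \<exists>i j. i \<le> j \<and> j < length Xs \<and> u \<in> Xs ! i \<and> v \<in> Xs ! j"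
    using dpd unfolding dir_path_decomp_def by (elim conjE)
  then show ?thesis
    using assms that by blast
qed

lemma dir_path_decomp_convex:
  assumes "i \<le> l" "l \<le> j" "j < length Xs" "u \<in> Xs ! i" "u \<in> Xs ! j"
  shows "u \<in> Xs ! l"
proof -
  have "\<forall>u i j l. i \<le> l \<and> l \<le> j \<and> j < length Xs \<and> u \<in> Xs ! i \<and> u \<in> Xs ! j \<longrightarrow> u \<in> Xs ! l"
    using dpd unfolding dir_path_decomp_def by (elim conjE)
  then show ?thesis
    using assms by blast
qed

lemma dir_path_decomp_span_interval:
  assumes "i < length Xs" "A \<subseteq> Xs ! i"
  obtains L R where "L \<le> R" "R < length Xs" "\<forall>k<length Xs. A \<subseteq> Xs ! k \<longleftrightarrow> L \<le> k \<and> k \<le> R"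
proof -
  define I where "I = {k. k < length Xs \<and> A \<subseteq> Xs ! k}"
  have "finite I" "i \<in> I"
    using assms by (auto simp: I_def)
  then have "Min I \<in> I" "Max I \<in> I"
    using Min_in Max_in by blast+
  show ?thesis
  proof (rule that)
    show "Min I \<le> Max I"
      using Min_le \<open>finite I\<close> \<open>Max I \<in> I\<close> by blast
    show "Max I < length Xs"
      using \<open>Max I \<in> I\<close> by (simp add: I_def)
    show "\<forall>k<length Xs. A \<subseteq> Xs ! k \<longleftrightarrow> Min I \<le> k \<and> k \<le> Max I"
    proof (intro allI impI)
      fix k assume "k < length Xs"
      show "A \<subseteq> Xs ! k \<longleftrightarrow> Min I \<le> k \<and> k \<le> Max I"
      proof
        assume "A \<subseteq> Xs ! k"
        with \<open>k < length Xs\<close> have "k \<in> I"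
          by (simp add: I_def)
        then show "Min I \<le> k \<and> k \<le> Max I"
          using \<open>finite I\<close> by simp
      next
        assume "Min I \<le> k \<and> k \<le> Max I"
        then show "A \<subseteq> Xs ! k"
          using dir_path_decomp_convex[of "Min I" k "Max I"] \<open>Min I \<in> I\<close> \<open>Max I \<in> I\<close>
          by (auto simp: I_def)
      qed
    qed
  qed
qed

lemma dir_path_decomp_span_extends_left:
  assumes "A \<subseteq> Xs ! L" "L < length Xs" "\<forall>a\<in>A. (a, b) \<in> E"
    and "j < L" "b \<in> Xs ! j" "b \<notin> Xs ! L"
  shows "A \<subseteq> Xs ! (L - 1)"
proof
  fix a assume "a \<in> A"
  then obtain i j' where "i \<le> j'" "j' < length Xs" "a \<in> Xs ! i" "b \<in> Xs ! j'"
    using assms(3) dir_path_decomp_arc by blast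
  moreover have "j' < L"
  proof (rule ccontr)
    assume "\<not> j' < L"
    then have "b \<in> Xs ! L"
      using dir_path_decomp_convex[of j L j' b] assms(4,5) \<open>j' < length Xs\<close> \<open>b \<in> Xs ! j'\<close> by simp
    with assms(6) show False ..
  qed
  moreover have "a \<in> Xs ! L"
    using assms(1) \<open>a \<in> A\<close> ..
  ultimately show "a \<in> Xs ! (L - 1)"
    using dir_path_decomp_convex[of i "L - 1" L a] assms(2) by simp
qed

lemma dir_path_decomp_span_extends_right:
  assumes "A \<subseteq> Xs ! R" "\<forall>a\<in>A. (b, a) \<in> E"
    and "R < j" "j < length Xs" "b \<in> Xs ! j" "b \<notin> Xs ! R"
  shows "A \<subseteq> Xs ! Suc R"
proof
  fix a assume "a \<in> A"
  then obtain i j' where "i \<le> j'" "j' < length Xs" "b \<in> Xs ! i" "a \<in> Xs ! j'"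
    using assms(2) dir_path_decomp_arc by blast
  moreover have "R < i"
  proof (rule ccontr)
    assume "\<not> R < i"
    then have "b \<in> Xs ! R"
      using dir_path_decomp_convex[of i R j b] assms(3-5) \<open>b \<in> Xs ! i\<close> by simp
    with assms(6) show False ..
  qed
  moreover have "a \<in> Xs ! R"
    using assms(1) \<open>a \<in> A\<close> ..
  ultimately show "a \<in> Xs ! Suc R"
    using dir_path_decomp_convex[of R "Suc R" j' a] by simp
qed

lemma dir_path_decomp_complete_neighbour_in_span:
  assumes span: "\<forall>k<length Xs. A \<subseteq> Xs ! k \<longleftrightarrow> L \<le> k \<and> k \<le> R"
    and "L \<le> R" "R < length Xs" "b \<in> V" "\<forall>a\<in>A. (a, b) \<in> E \<and> (b, a) \<in> E"
  shows "\<exists>l\<in>{L..R}. b \<in> Xs ! l"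
proof (rule ccontr)
  assume outside: "\<not> (\<exists>l\<in>{L..R}. b \<in> Xs ! l)"
  then have "b \<notin> Xs ! L" "b \<notin> Xs ! R"
    using assms(2) by auto
  have arcs_to_b: "\<forall>a\<in>A. (a, b) \<in> E" and arcs_from_b: "\<forall>a\<in>A. (b, a) \<in> E"
    using assms(5) by auto
  obtain j where j: "j < length Xs" "b \<in> Xs ! j"
    using \<open>b \<in> V\<close> dir_path_decomp_vertex_in_bag by blast
  with outside consider "j < L" | "R < j"
    by (metis atLeastAtMost_iff not_le)
  then show False
  proof cases
    case 1
    have "L < length Xs" "A \<subseteq> Xs ! L"
      using span assms(2,3) by simp_all
    with arcs_to_b 1 j(2) \<open>b \<notin> Xs ! L\<close> have "A \<subseteq> Xs ! (L - 1)"
      by (intro dir_path_decomp_span_extends_left)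
    then have "L \<le> L - 1"
      using span assms(2,3) by simp
    with 1 show False
      by linarith
  next
    case 2
    have "A \<subseteq> Xs ! R"
      using span assms(2,3) by simp
    with arcs_from_b 2 j \<open>b \<notin> Xs ! R\<close> have "A \<subseteq> Xs ! Suc R"
      by (intro dir_path_decomp_span_extends_right)
    with 2 show False
      using span j(1) by simp
  qed
qed

lemma dir_path_decomp_clamp_bag:
  assumes "i < length Xs" "u \<in> Xs ! i" "R < length Xs" "\<exists>l\<in>{L..R}. u \<in> Xs ! l"
  shows "u \<in> Xs ! max L (min R i)"
proof -
  obtain l where "L \<le> l" "l \<le> R" "u \<in> Xs ! l"
    using assms(4) by auto
  \<comment> \<open>the clamped index lies between \<open>i\<close> and \<open>l\<close>\<close>
  then have "min i l \<le> max L (min R i)" "max L (min R i) \<le> max i l"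
    by linarith+
  moreover have "u \<in> Xs ! min i l" "u \<in> Xs ! max i l" "max i l < length Xs"
    using assms \<open>u \<in> Xs ! l\<close> \<open>l \<le> R\<close> by (simp_all add: min_def max_def)
  ultimately show ?thesis
    using dir_path_decomp_convex by blast
qed

lemma dir_path_decomp_window:
  assumes "L \<le> R" "R < length Xs" and S_in_window: "\<forall>u\<in>S. \<exists>l\<in>{L..R}. u \<in> Xs ! l"
  shows "dir_path_decomp S (induced_arcs E S) (map (\<lambda>i. Xs ! i \<inter> S) [L..<Suc R])"
    (is "dir_path_decomp S _ ?Ys")
proof -
  have len: "length ?Ys = Suc R - L" and nth: "k < Suc R - L \<Longrightarrow> ?Ys ! k = Xs ! (L + k) \<inter> S" for k
    by (simp_all del: upt_Suc)
  have "\<Union>(set ?Ys) = S"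
  proof
    show "\<Union>(set ?Ys) \<subseteq> S"
      by auto
    show "S \<subseteq> \<Union>(set ?Ys)"
    proof
      fix u assume "u \<in> S"
      then obtain l where "l \<in> {L..R}" "u \<in> Xs ! l"
        using S_in_window by blast
      then have "l \<in> set [L..<Suc R]"
        by (simp del: upt_Suc)
      then have "Xs ! l \<inter> S \<in> set ?Ys"
        unfolding set_map by (rule imageI)
      with \<open>u \<in> S\<close> \<open>u \<in> Xs ! l\<close> show "u \<in> \<Union>(set ?Ys)"
        by blast
    qed
  qed
  moreover have "\<exists>i j. i \<le> j \<and> j < length ?Ys \<and> u \<in> ?Ys ! i \<and> v \<in> ?Ys ! j"
    if "(u, v) \<in> induced_arcs E S" for u v
  proof -
    have "(u, v) \<in> E" "u \<in> S" "v \<in> S"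
      using that by (auto simp: induced_arcs_def)
    then obtain i j where "i \<le> j" "j < length Xs" "u \<in> Xs ! i" "v \<in> Xs ! j"
      using dir_path_decomp_arc by blast
    define ci cj where "ci = max L (min R i) - L" and "cj = max L (min R j) - L"
    have "ci \<le> cj" "cj < Suc R - L"
      using \<open>i \<le> j\<close> assms(1) unfolding ci_def cj_def by linarith+
    moreover have "u \<in> Xs ! (L + ci)" "v \<in> Xs ! (L + cj)"
      using dir_path_decomp_clamp_bag S_in_window \<open>u \<in> S\<close> \<open>v \<in> S\<close> \<open>i \<le> j\<close> \<open>j < length Xs\<close>
        \<open>u \<in> Xs ! i\<close> \<open>v \<in> Xs ! j\<close> assms(1,2)
      unfolding ci_def cj_def by (simp_all add: le_less_trans)
    moreover have "u \<in> ?Ys ! ci" "v \<in> ?Ys ! cj"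
      using calculation \<open>u \<in> S\<close> \<open>v \<in> S\<close> nth[of ci] nth[of cj] by simp_all
    ultimately show ?thesis
      unfolding len by blast
  qed
  moreover have "u \<in> ?Ys ! l"
    if "i \<le> l" "l \<le> j" "j < length ?Ys" "u \<in> ?Ys ! i" "u \<in> ?Ys ! j" for u i j l
  proof -
    have "i < Suc R - L" "l < Suc R - L" "j < Suc R - L"
      using that(1-3) len by simp_all
    then have "u \<in> Xs ! (L + i)" "u \<in> Xs ! (L + j)" "u \<in> S"
      using that(4,5) nth by simp_all
    then have "u \<in> Xs ! (L + l)"
      using dir_path_decomp_convex[of "L + i" "L + l" "L + j" u] that(1,2) \<open>j < Suc R - L\<close> assms(2)
      by simp
    then show ?thesis
      using nth[of l] \<open>l < Suc R - L\<close> \<open>u \<in> S\<close> by simp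
  qed
  ultimately show ?thesis
    unfolding dir_path_decomp_def by blast
qed

lemma dir_path_decomp_complete_bipartite_window:
  assumes "i < length Xs" "A \<subseteq> Xs ! i" "B \<subseteq> V" "\<forall>a\<in>A. \<forall>b\<in>B. (a, b) \<in> E \<and> (b, a) \<in> E"
  obtains L R where "L \<le> R" "R < length Xs" "\<forall>k\<in>{L..R}. A \<subseteq> Xs ! k" "\<forall>b\<in>B. \<exists>l\<in>{L..R}. b \<in> Xs ! l"
    "dir_path_decomp (A \<union> B) (induced_arcs E (A \<union> B)) (map (\<lambda>k. Xs ! k \<inter> (A \<union> B)) [L..<Suc R])"
proof -
  obtain L R where LR: "L \<le> R" "R < length Xs"
    and span: "\<forall>k<length Xs. A \<subseteq> Xs ! k \<longleftrightarrow> L \<le> k \<and> k \<le> R"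
    using dir_path_decomp_span_interval assms(1,2) by metis
  have A_in_window: "\<forall>k\<in>{L..R}. A \<subseteq> Xs ! k"
    using span LR by simp
  have B_in_window: "\<forall>b\<in>B. \<exists>l\<in>{L..R}. b \<in> Xs ! l"
  proof
    fix b assume "b \<in> B"
    with assms(3,4) have "b \<in> V" "\<forall>a\<in>A. (a, b) \<in> E \<and> (b, a) \<in> E"
      by blast+
    then show "\<exists>l\<in>{L..R}. b \<in> Xs ! l"
      by (rule dir_path_decomp_complete_neighbour_in_span[OF span LR])
  qed
  moreover have "A \<subseteq> Xs ! L"
    using A_in_window LR by simp
  ultimately have "\<forall>u\<in>A \<union> B. \<exists>l\<in>{L..R}. u \<in> Xs ! l"
    using LR by auto
  then have "dir_path_decomp (A \<union> B) (induced_arcs E (A \<union> B)) (map (\<lambda>k. Xs ! k \<inter> (A \<union> B)) [L..<Suc R])"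
    by (rule dir_path_decomp_window[OF LR])
  with LR A_in_window B_in_window show ?thesis
    using that by blast
qed

end

theorem lemma3p7:
  fixes V :: "'a set" and E :: "('a \<times> 'a) set" and Xs :: "'a set list"
    and A B :: "'a set"
  assumes "digraph V E"
    and "dir_path_decomp V E Xs"
    and "A \<subseteq> V" and "B \<subseteq> V"
    and "A \<inter> B = {}"
    and "\<forall>u\<in>A. \<forall>v\<in>B. (u, v) \<in> E \<and> (v, u) \<in> E"
    and "\<exists>i. 1 \<le> i \<and> i \<le> length Xs \<and> A \<subseteq> Xs ! (i - 1)"
  shows "\<exists>i1 i2. 1 \<le> i1 \<and> i1 \<le> i2 \<and> i2 \<le> length Xs \<and>
           (\<forall>i. i1 \<le> i \<and> i \<le> i2 \<longrightarrow> A \<subseteq> Xs ! (i - 1)) \<and>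
           B \<subseteq> (\<Union>i\<in>{i1..i2}. Xs ! (i - 1)) \<and>
           dir_path_decomp (A \<union> B) (induced_arcs E (A \<union> B))
             (map (\<lambda>i. Xs ! (i - 1) \<inter> (A \<union> B)) [i1..<Suc i2])"
proof -
  obtain k where "1 \<le> k" "k \<le> length Xs" "A \<subseteq> Xs ! (k - 1)"
    using assms(7) by blast
  then have "k - 1 < length Xs"
    by simp
  then obtain L R where LR: "L \<le> R" "R < length Xs"
    and A_in_window: "\<forall>k\<in>{L..R}. A \<subseteq> Xs ! k"
    and B_in_window: "\<forall>b\<in>B. \<exists>l\<in>{L..R}. b \<in> Xs ! l"
    and window: "dir_path_decomp (A \<union> B) (induced_arcs E (A \<union> B))
                   (map (\<lambda>k. Xs ! k \<inter> (A \<union> B)) [L..<Suc R])"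
    using dir_path_decomp_complete_bipartite_window[OF assms(2) _ \<open>A \<subseteq> Xs ! (k - 1)\<close> assms(4,6)]
    by blast
  \<comment> \<open>the statement counts bags from 1, so \<open>i1 = Suc L\<close> and \<open>i2 = Suc R\<close>\<close>
  have "B \<subseteq> (\<Union>i\<in>{Suc L..Suc R}. Xs ! (i - 1))"
  proof
    fix b assume "b \<in> B"
    then obtain l where "l \<in> {L..R}" "b \<in> Xs ! l"
      using B_in_window by blast
    then show "b \<in> (\<Union>i\<in>{Suc L..Suc R}. Xs ! (i - 1))"
      by (intro UN_I[of "Suc l"]) simp_all
  qed
  moreover have "map (\<lambda>i. Xs ! (i - 1) \<inter> (A \<union> B)) [Suc L..<Suc (Suc R)]
                   = map (\<lambda>k. Xs ! k \<inter> (A \<union> B)) [L..<Suc R]"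
    by (simp only: map_Suc_upt[symmetric] map_map o_def diff_Suc_1)
  moreover have "A \<subseteq> Xs ! (i - 1)" if "Suc L \<le> i \<and> i \<le> Suc R" for i
    using A_in_window that by (cases i) auto
  ultimately show ?thesis
    using LR window by (intro exI[of _ "Suc L"] exI[of _ "Suc R"]) auto
qed

end
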